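(* Let $r\in(1,2)$ and let $c_r$ be a constant such that $|e^{-x}-1+x|\le c_r|x|^r$ for all $x>0$. Let $Z$ be a nonnegative real random variable with $\mathbb{E}[Z^r]<+\infty$, and let $k_Z(\xi)=\log\mathbb{E}[e^{-\xi Z}]$. Then for $0\le\xi\le(2\mathbb{E}[Z])^{-1}$, $$|k_Z(\xi)+\xi\mathbb{E}[Z]|\le c_r\xi^r\mathbb{E}[Z^r]+\xi^2(\mathbb{E}[Z])^2.$$ Moreover $$\sup_{\xi>0}\frac{|k_Z(\xi)|^r}{|\xi|^r}=\mathbb{E}[Z]^r.$$ *)

theory Defs
  imports "HOL-Probability.Probability"
begin

definition log_laplace :: "'a measure \<Rightarrow> ('a \<Rightarrow> real) \<Rightarrow> real \<Rightarrow> real" where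
  "log_laplace M Z \<xi> = ln (integral\<^sup>L M (\<lambda>\<omega>. exp (- \<xi> * Z \<omega>)))"

end

theory Submission
  imports Defs
begin

text \<open>
  Write m = E[Z] and L(\<xi>) = E[exp (-\<xi> Z)]. The remainder R = L(\<xi>) - 1 + \<xi> m is the
  expectation of exp (-\<xi> Z) - 1 + \<xi> Z, which lies between 0 and c \<xi>^r Z^r. Hence
  k_Z(\<xi>) = ln (1 - \<xi> m + R) with 0 \<le> R \<le> c \<xi>^r E[Z^r], and the elementary bounds
  -u - u^2 \<le> ln (1 - u) for u \<le> 1/2 and ln x \<le> x - 1 give the first claim.
  For the supremum, Jensen's inequality exp (-\<xi> m) \<le> L(\<xi>) \<le> 1 gives |k_Z(\<xi>)| \<le> \<xi> m,
  while the first claim with r > 1 shows k_Z(\<xi>) / \<xi> \<rightarrow> -m as \<xi> \<rightarrow> 0+, so the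
  bound m^r is attained in the limit.
\<close>

lemma ln_one_minus_ge:
  fixes u :: real
  assumes "0 \<le> u" "u \<le> 1/2"
  shows "- u - u\<^sup>2 \<le> ln (1 - u)"
proof -
  let ?f = "\<lambda>x::real. ln (1 - x) + x + x\<^sup>2"
  have "?f 0 \<le> ?f u"
  proof (rule DERIV_nonneg_imp_increasing_open[OF assms(1)])
    fix x assume x: "0 < x" "x < u"
    have "DERIV ?f x :> (-1/(1-x) + 1 + 2*x)"
      using x assms by (auto intro!: derivative_eq_intros)
    moreover have "-1/(1-x) + 1 + 2*x = x*(1-2*x)/(1-x)"
      using x assms by (simp add: field_simps power2_eq_square)
    moreover have "x*(1-2*x)/(1-x) \<ge> 0"
      using x assms by (intro divide_nonneg_pos mult_nonneg_nonneg) auto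
    ultimately show "\<exists>y. DERIV ?f x :> y \<and> y \<ge> 0" by auto
  next
    show "continuous_on {0..u} ?f" using assms by (auto intro!: continuous_intros)
  qed
  then show ?thesis by simp
qed

lemma abs_ln_one_minus_add_le:
  fixes u R :: real
  assumes "0 \<le> u" "u \<le> 1/2" "0 \<le> R"
  shows "\<bar>ln (1 - u + R) + u\<bar> \<le> R + u\<^sup>2"
proof -
  have pos: "0 < 1 - u + R" using assms by simp
  have "ln (1 - u + R) + u \<le> R" using ln_le_minus_one[OF pos] by simp
  moreover have "ln (1 - u) \<le> ln (1 - u + R)" using assms by simp
  ultimately show ?thesis using ln_one_minus_ge[OF assms(1,2)] assms(3)
    by (simp add: abs_le_iff) (smt (verit) zero_le_power2)
qed

lemma exp_neg_taylor_remainder_le: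
  fixes x c r :: real
  assumes c: "\<forall>x::real. x > 0 \<longrightarrow> \<bar>exp (- x) - 1 + x\<bar> \<le> c * \<bar>x\<bar> powr r"
    and "0 \<le> x"
  shows "exp (- x) - 1 + x \<le> c * x powr r"
proof (cases "x = 0")
  case False
  then have "\<bar>exp (- x) - 1 + x\<bar> \<le> c * \<bar>x\<bar> powr r" using assms by simp
  then show ?thesis using \<open>0 \<le> x\<close> by simp
qed simp

lemma SUP_abs_powr_ratio_eq:
  fixes f :: "real \<Rightarrow> real" and m r :: real
  assumes "0 < r" "0 \<le> m"
    and bound: "\<And>\<xi>. 0 < \<xi> \<Longrightarrow> \<bar>f \<xi>\<bar> \<le> \<xi> * m"
    and lim: "((\<lambda>\<xi>. \<bar>f \<xi> / \<xi>\<bar>) \<longlongrightarrow> m) (at_right 0)"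
  shows "(SUP \<xi>\<in>{0<..}. \<bar>f \<xi>\<bar> powr r / \<bar>\<xi>\<bar> powr r) = m powr r"
proof -
  have ratio: "\<bar>f \<xi>\<bar> powr r / \<bar>\<xi>\<bar> powr r = \<bar>f \<xi> / \<xi>\<bar> powr r" for \<xi>
    by (simp add: powr_divide abs_divide)
  have upper: "\<bar>f \<xi> / \<xi>\<bar> powr r \<le> m powr r" if "0 < \<xi>" for \<xi>
    using bound[OF that] that assms(1)
    by (intro powr_mono2) (auto simp: abs_divide divide_le_eq mult.commute)
  then have bdd: "bdd_above ((\<lambda>\<xi>. \<bar>f \<xi> / \<xi>\<bar> powr r) ` {0<..})"
    by (intro bdd_aboveI2) auto
  have "(SUP \<xi>\<in>{0<..}. \<bar>f \<xi> / \<xi>\<bar> powr r) = m powr r"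
  proof (rule antisym)
    show "(SUP \<xi>\<in>{0<..}. \<bar>f \<xi> / \<xi>\<bar> powr r) \<le> m powr r"
      using upper by (intro cSUP_least) auto
    have "((\<lambda>\<xi>. \<bar>f \<xi> / \<xi>\<bar> powr r) \<longlongrightarrow> m powr r) (at_right 0)"
      using lim assms(1) by (intro tendsto_powr') auto
    moreover have "\<forall>\<^sub>F \<xi> in at_right 0. \<bar>f \<xi> / \<xi>\<bar> powr r \<le> (SUP \<xi>\<in>{0<..}. \<bar>f \<xi> / \<xi>\<bar> powr r)"
      using eventually_at_right_less[of "0::real"]
      by eventually_elim (use bdd in \<open>auto intro: cSUP_upper\<close>)
    ultimately show "m powr r \<le> (SUP \<xi>\<in>{0<..}. \<bar>f \<xi> / \<xi>\<bar> powr r)"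
      by (rule tendsto_upperbound) simp
  qed
  then show ?thesis by (simp only: ratio)
qed

lemma (in finite_measure) integrable_of_integrable_powr:
  fixes f :: "'a \<Rightarrow> real" and r :: real
  assumes "1 \<le> r" "f \<in> borel_measurable M" "\<And>x. x \<in> space M \<Longrightarrow> 0 \<le> f x"
    and "integrable M (\<lambda>x. f x powr r)"
  shows "integrable M f"
proof (rule Bochner_Integration.integrable_bound[where f="\<lambda>x. 1 + f x powr r"])
  show "integrable M (\<lambda>x. 1 + f x powr r)" using assms(4) by simp
  have "f x \<le> 1 + f x powr r" if "x \<in> space M" for x
  proof (cases "f x \<le> 1")
    case False
    then have "f x powr 1 \<le> f x powr r" using assms(1) by (intro powr_mono) auto
    then show ?thesis using False by simp
  qed (smt (verit) powr_ge_zero)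
  then show "AE x in M. norm (f x) \<le> norm (1 + f x powr r)"
    using assms(3) by (intro AE_I2) simp
qed (fact assms(2))

context prob_space
begin

context
  fixes Z :: "'a \<Rightarrow> real"
  assumes Z_measurable: "Z \<in> borel_measurable M"
    and Z_nonneg: "\<And>\<omega>. \<omega> \<in> space M \<Longrightarrow> 0 \<le> Z \<omega>"
begin

lemma integrable_exp_neg_mult:
  assumes "0 \<le> \<xi>"
  shows "integrable M (\<lambda>\<omega>. exp (- \<xi> * Z \<omega>))"
proof (rule integrable_const_bound[where B=1])
  show "AE \<omega> in M. norm (exp (- \<xi> * Z \<omega>)) \<le> 1"
    using Z_nonneg assms by (intro AE_I2) (auto simp: mult_nonneg_nonneg)
qed (use Z_measurable in simp)

lemma laplace_le_one:
  assumes "0 \<le> \<xi>"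
  shows "expectation (\<lambda>\<omega>. exp (- \<xi> * Z \<omega>)) \<le> 1"
proof -
  have "expectation (\<lambda>\<omega>. exp (- \<xi> * Z \<omega>)) \<le> expectation (\<lambda>_. 1)"
    using Z_nonneg assms
    by (intro integral_mono_AE integrable_exp_neg_mult) (auto simp: mult_nonneg_nonneg)
  then show ?thesis by (simp add: prob_space)
qed

text \<open>Jensen's inequality, via the tangent line of \<open>exp\<close> at \<open>-\<xi> E[Z]\<close>.\<close>

lemma exp_neg_mult_expectation_le_laplace:
  assumes Z_int: "integrable M Z" and "0 \<le> \<xi>"
  shows "exp (- \<xi> * expectation Z) \<le> expectation (\<lambda>\<omega>. exp (- \<xi> * Z \<omega>))"
proof -
  let ?m = "expectation Z"
  have "exp (- \<xi> * ?m) = expectation (\<lambda>\<omega>. exp (- \<xi> * ?m) * (1 - \<xi> * (Z \<omega> - ?m)))"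
    using Z_int by (simp add: algebra_simps prob_space)
  also have "\<dots> \<le> expectation (\<lambda>\<omega>. exp (- \<xi> * Z \<omega>))"
  proof (intro integral_mono integrable_exp_neg_mult \<open>0 \<le> \<xi>\<close>)
    show "integrable M (\<lambda>\<omega>. exp (- \<xi> * ?m) * (1 - \<xi> * (Z \<omega> - ?m)))"
      using Z_int by simp
    fix \<omega>
    have "exp (- \<xi> * ?m) * (1 - \<xi> * (Z \<omega> - ?m)) \<le> exp (- \<xi> * ?m) * exp (- \<xi> * (Z \<omega> - ?m))"
      using exp_ge_add_one_self[of "- \<xi> * (Z \<omega> - ?m)"] by (intro mult_left_mono) auto
    also have "\<dots> = exp (- \<xi> * Z \<omega>)" by (simp add: exp_add[symmetric] algebra_simps)
    finally show "exp (- \<xi> * ?m) * (1 - \<xi> * (Z \<omega> - ?m)) \<le> exp (- \<xi> * Z \<omega>)" .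
  qed
  finally show ?thesis .
qed

lemma abs_log_laplace_le:
  assumes "integrable M Z" and "0 \<le> \<xi>"
  shows "\<bar>log_laplace M Z \<xi>\<bar> \<le> \<xi> * expectation Z"
proof -
  let ?L = "expectation (\<lambda>\<omega>. exp (- \<xi> * Z \<omega>))"
  have lower: "exp (- \<xi> * expectation Z) \<le> ?L"
    by (rule exp_neg_mult_expectation_le_laplace[OF assms])
  then have "0 < ?L" by (smt (verit) exp_gt_zero)
  then have "- \<xi> * expectation Z \<le> ln ?L"
    using lower by (metis ln_exp ln_le_cancel_iff exp_gt_zero)
  moreover have "ln ?L \<le> 0"
    using \<open>0 < ?L\<close> laplace_le_one[OF assms(2)] by simp
  ultimately show ?thesis unfolding log_laplace_def by simp
qed

lemma log_laplace_remainder_bound: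
  assumes Z_int: "integrable M Z" and Zr_int: "integrable M (\<lambda>\<omega>. Z \<omega> powr r)"
    and c: "\<forall>x::real. x > 0 \<longrightarrow> \<bar>exp (- x) - 1 + x\<bar> \<le> c * \<bar>x\<bar> powr r"
    and "0 \<le> \<xi>" and "2 * expectation Z * \<xi> \<le> 1"
  shows "\<bar>log_laplace M Z \<xi> + \<xi> * expectation Z\<bar>
           \<le> c * \<xi> powr r * expectation (\<lambda>\<omega>. Z \<omega> powr r) + \<xi>\<^sup>2 * (expectation Z)\<^sup>2"
proof -
  define u where "u = \<xi> * expectation Z"
  define R where "R = expectation (\<lambda>\<omega>. exp (- \<xi> * Z \<omega>) - 1 + \<xi> * Z \<omega>)"
  have laplace_eq: "expectation (\<lambda>\<omega>. exp (- \<xi> * Z \<omega>)) = 1 - u + R"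
    unfolding R_def u_def using integrable_exp_neg_mult[OF \<open>0 \<le> \<xi>\<close>] Z_int by (simp add: prob_space)
  have "0 \<le> R"
    unfolding R_def
  proof (intro integral_nonneg_AE AE_I2)
    fix \<omega>
    show "0 \<le> exp (- \<xi> * Z \<omega>) - 1 + \<xi> * Z \<omega>"
      using exp_ge_add_one_self[of "- \<xi> * Z \<omega>"] by simp
  qed
  have "R \<le> expectation (\<lambda>\<omega>. c * \<xi> powr r * Z \<omega> powr r)"
    unfolding R_def
  proof (intro integral_mono_AE AE_I2)
    fix \<omega> assume "\<omega> \<in> space M"
    then have "exp (- (\<xi> * Z \<omega>)) - 1 + \<xi> * Z \<omega> \<le> c * (\<xi> * Z \<omega>) powr r"
      using Z_nonneg \<open>0 \<le> \<xi>\<close> by (intro exp_neg_taylor_remainder_le[OF c]) simp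
    then show "exp (- \<xi> * Z \<omega>) - 1 + \<xi> * Z \<omega> \<le> c * \<xi> powr r * Z \<omega> powr r"
      using Z_nonneg \<open>\<omega> \<in> space M\<close> \<open>0 \<le> \<xi>\<close> by (simp add: powr_mult mult.assoc)
  qed (use integrable_exp_neg_mult[OF \<open>0 \<le> \<xi>\<close>] Z_int Zr_int in auto)
  then have "R \<le> c * \<xi> powr r * expectation (\<lambda>\<omega>. Z \<omega> powr r)" by simp
  moreover have "0 \<le> u" "u \<le> 1/2"
    using assms(4,5) integral_nonneg_AE[of Z M] Z_nonneg by (auto simp: u_def mult_ac)
  ultimately have "\<bar>log_laplace M Z \<xi> + u\<bar> \<le> c * \<xi> powr r * expectation (\<lambda>\<omega>. Z \<omega> powr r) + u\<^sup>2"
    using abs_ln_one_minus_add_le[of u R] \<open>0 \<le> R\<close> unfolding log_laplace_def laplace_eq by simp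
  then show ?thesis by (simp add: u_def power_mult_distrib)
qed

lemma abs_log_laplace_div_tendsto:
  assumes Z_int: "integrable M Z" and Zr_int: "integrable M (\<lambda>\<omega>. Z \<omega> powr r)"
    and c: "\<forall>x::real. x > 0 \<longrightarrow> \<bar>exp (- x) - 1 + x\<bar> \<le> c * \<bar>x\<bar> powr r"
    and "1 < r"
  shows "((\<lambda>\<xi>. \<bar>log_laplace M Z \<xi> / \<xi>\<bar>) \<longlongrightarrow> expectation Z) (at_right 0)"
proof -
  let ?m = "expectation Z" and ?P = "expectation (\<lambda>\<omega>. Z \<omega> powr r)"
  have "0 \<le> ?m" using Z_nonneg by (intro integral_nonneg_AE) auto
  \<comment> \<open>The radius 1 / (2 m + 1) keeps 2 m \<xi> \<le> 1 without a case split on m = 0.\<close>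
  have "\<forall>\<^sub>F \<xi> in at_right 0. \<xi> \<in> {0<..<1 / (2 * ?m + 1)}"
    using \<open>0 \<le> ?m\<close> by (intro eventually_at_right_real) simp
  then have "\<forall>\<^sub>F \<xi> in at_right 0.
      norm (log_laplace M Z \<xi> / \<xi> + ?m) \<le> c * \<xi> powr (r - 1) * ?P + \<xi> * ?m\<^sup>2"
  proof eventually_elim
    case (elim \<xi>)
    then have "0 < \<xi>" "2 * ?m * \<xi> \<le> 1" using \<open>0 \<le> ?m\<close> by (auto simp: field_simps)
    have "log_laplace M Z \<xi> / \<xi> + ?m = (log_laplace M Z \<xi> + \<xi> * ?m) / \<xi>"
      using \<open>0 < \<xi>\<close> by (simp add: field_simps)
    then have "norm (log_laplace M Z \<xi> / \<xi> + ?m) = \<bar>log_laplace M Z \<xi> + \<xi> * ?m\<bar> / \<xi>"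
      using \<open>0 < \<xi>\<close> by simp
    also have "\<dots> \<le> (c * \<xi> powr r * ?P + \<xi>\<^sup>2 * ?m\<^sup>2) / \<xi>"
      using \<open>0 < \<xi>\<close> \<open>2 * ?m * \<xi> \<le> 1\<close>
      by (intro divide_right_mono log_laplace_remainder_bound[OF Z_int Zr_int c]) auto
    also have "\<xi> powr r = \<xi> powr (r - 1) * \<xi>"
      using \<open>0 < \<xi>\<close> by (simp add: powr_diff)
    finally show ?case
      using \<open>0 < \<xi>\<close> by (simp add: power2_eq_square add_divide_distrib)
  qed
  moreover have "((\<lambda>\<xi>::real. \<xi> powr (r - 1)) \<longlongrightarrow> 0) (at_right 0)"
    using \<open>1 < r\<close> by (intro tendsto_zero_powrI) (auto intro!: tendsto_ident_at eventually_at_rightI[of 0 1])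
  then have "((\<lambda>\<xi>. c * \<xi> powr (r - 1) * ?P + \<xi> * ?m\<^sup>2) \<longlongrightarrow> c * 0 * ?P + 0 * ?m\<^sup>2) (at_right 0)"
    by (intro tendsto_intros tendsto_ident_at)
  then have "((\<lambda>\<xi>. c * \<xi> powr (r - 1) * ?P + \<xi> * ?m\<^sup>2) \<longlongrightarrow> 0) (at_right 0)"
    by simp
  ultimately have shifted: "((\<lambda>\<xi>. log_laplace M Z \<xi> / \<xi> + ?m) \<longlongrightarrow> 0) (at_right 0)"
    by (rule Lim_null_comparison)
  have "((\<lambda>\<xi>. log_laplace M Z \<xi> / \<xi>) \<longlongrightarrow> - ?m) (at_right 0)"
    using tendsto_diff[OF shifted tendsto_const[of ?m]] by simp
  then have "((\<lambda>\<xi>. \<bar>log_laplace M Z \<xi> / \<xi>\<bar>) \<longlongrightarrow> \<bar>- ?m\<bar>) (at_right 0)"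
    by (rule tendsto_rabs)
  then show ?thesis using \<open>0 \<le> ?m\<close> by simp
qed

end

end

theorem lemmaA3:
  fixes M :: "'a measure" and Z :: "'a \<Rightarrow> real" and r c :: real
  assumes "prob_space M"
    and "1 < r" and "r < 2"
    and "\<forall>x::real. x > 0 \<longrightarrow> \<bar>exp (- x) - 1 + x\<bar> \<le> c * \<bar>x\<bar> powr r"
    and "Z \<in> borel_measurable M"
    and "\<forall>\<omega>\<in>space M. Z \<omega> \<ge> 0"
    and "integrable M (\<lambda>\<omega>. Z \<omega> powr r)"
  shows "(\<forall>\<xi>::real. 0 \<le> \<xi> \<and> 2 * integral\<^sup>L M Z * \<xi> \<le> 1 \<longrightarrow>
           \<bar>log_laplace M Z \<xi> + \<xi> * integral\<^sup>L M Z\<bar>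
             \<le> c * \<xi> powr r * integral\<^sup>L M (\<lambda>\<omega>. Z \<omega> powr r) + \<xi>\<^sup>2 * (integral\<^sup>L M Z)\<^sup>2)
       \<and> (SUP \<xi>\<in>{0::real<..}. \<bar>log_laplace M Z \<xi>\<bar> powr r / \<bar>\<xi>\<bar> powr r) = (integral\<^sup>L M Z) powr r"
proof -
  interpret prob_space M by fact
  have Z_nonneg: "\<And>\<omega>. \<omega> \<in> space M \<Longrightarrow> 0 \<le> Z \<omega>" using assms(6) by blast
  have Z_int: "integrable M Z"
    using assms(2) integrable_of_integrable_powr[OF _ assms(5) Z_nonneg assms(7)] by simp
  have "0 \<le> integral\<^sup>L M Z" using Z_nonneg by (intro integral_nonneg_AE) auto
  show ?thesis
  proof
    show "\<forall>\<xi>::real. 0 \<le> \<xi> \<and> 2 * integral\<^sup>L M Z * \<xi> \<le> 1 \<longrightarrow>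
           \<bar>log_laplace M Z \<xi> + \<xi> * integral\<^sup>L M Z\<bar>
             \<le> c * \<xi> powr r * integral\<^sup>L M (\<lambda>\<omega>. Z \<omega> powr r) + \<xi>\<^sup>2 * (integral\<^sup>L M Z)\<^sup>2"
      using log_laplace_remainder_bound[OF assms(5) Z_nonneg Z_int assms(7,4)] by blast
    show "(SUP \<xi>\<in>{0::real<..}. \<bar>log_laplace M Z \<xi>\<bar> powr r / \<bar>\<xi>\<bar> powr r) = (integral\<^sup>L M Z) powr r"
      using assms(2) \<open>0 \<le> integral\<^sup>L M Z\<close>
        abs_log_laplace_le[OF assms(5) Z_nonneg Z_int]
        abs_log_laplace_div_tendsto[OF assms(5) Z_nonneg Z_int assms(7,4,2)]
      by (intro SUP_abs_powr_ratio_eq) auto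
  qed
qed

end
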